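(* There is an absolute constant $c>0$ with the following property. Let $q\ge 2$ be a prime power and let $R$ be a finite local ring containing the field $\mathbb{F}_q$ as a subring, with $d=\dim_{\mathbb{F}_q}R$ and $\delta=\dim_{\mathbb{F}_q}(R\setminus R^* )$, where $R^*$ is the set of units of $R$. If $d=2+\delta$, then the chain geometry $\Sigma(\mathbb{F}_q,R)$ contains a blocking set of size at most $c\,q^{d-1}\log q$ (i.e., of size $O(q^{d-1}\log q)$).
   Context: All rings are associative with unit element $1\neq 0$, and subrings share the unit. $R^2$ is regarded as a left $R$-module. The projective line $\mathbb{P}(R)$ is the set of all submodules of $R^2$ of the form $R(a,b)$ where $(a\ b)$ is the first row of some invertible $2\times 2$ matrix over $R$. For a field $K\subseteq R$ (as a subring), $\mathbb{P}(K)$ is embedded in $\mathbb{P}(R)$ via $K(a,b)\mapsto R(a,b)$. The chain geometry $\Sigma(K,R)$ has point set $\mathbb{P}(R)$ and its blocks, called chains, are the sets $\mathbb{P}(K)^g$ with $g\in\mathrm{GL}_2(R)$. A blocking set is a set $B$ of points such that every chain contains at least one element of $B$. *)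

theory Defs
  imports "HOL-Computational_Algebra.Primes" "HOL-Algebra.Embedded_Algebras" "HOL-Algebra.Ideal" Complex_Main
begin

definition local_ring :: "('a, 'b) ring_scheme \<Rightarrow> bool" where
  "local_ring R \<longleftrightarrow> ring R \<and> ideal (carrier R - Units R) R"

text \<open>2x2 matrices over R as quadruples (a,b,c,d) = [[a,b],[c,d]].\<close>
type_synonym 'a mat2 = "'a \<times> 'a \<times> 'a \<times> 'a"

definition mat2_mult :: "('a, 'b) ring_scheme \<Rightarrow> 'a mat2 \<Rightarrow> 'a mat2 \<Rightarrow> 'a mat2" where
  "mat2_mult R M N = (case M of (a,b,c,d) \<Rightarrow> case N of (e,f,g,h) \<Rightarrow>
     (a \<otimes>\<^bsub>R\<^esub> e \<oplus>\<^bsub>R\<^esub> b \<otimes>\<^bsub>R\<^esub> g, a \<otimes>\<^bsub>R\<^esub> f \<oplus>\<^bsub>R\<^esub> b \<otimes>\<^bsub>R\<^esub> h,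
      c \<otimes>\<^bsub>R\<^esub> e \<oplus>\<^bsub>R\<^esub> d \<otimes>\<^bsub>R\<^esub> g, c \<otimes>\<^bsub>R\<^esub> f \<oplus>\<^bsub>R\<^esub> d \<otimes>\<^bsub>R\<^esub> h))"

definition mat2_one :: "('a, 'b) ring_scheme \<Rightarrow> 'a mat2" where
  "mat2_one R = (\<one>\<^bsub>R\<^esub>, \<zero>\<^bsub>R\<^esub>, \<zero>\<^bsub>R\<^esub>, \<one>\<^bsub>R\<^esub>)"

definition GL2 :: "('a, 'b) ring_scheme \<Rightarrow> 'a set \<Rightarrow> 'a mat2 set" where
  "GL2 R S = {M. M \<in> S \<times> S \<times> S \<times> S \<and>
     (\<exists>N \<in> S \<times> S \<times> S \<times> S. mat2_mult R M N = mat2_one R \<and> mat2_mult R N M = mat2_one R)}"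

definition cyc :: "('a, 'b) ring_scheme \<Rightarrow> 'a set \<Rightarrow> 'a \<Rightarrow> 'a \<Rightarrow> ('a \<times> 'a) set" where
  "cyc R S a b = {(r \<otimes>\<^bsub>R\<^esub> a, r \<otimes>\<^bsub>R\<^esub> b) | r. r \<in> S}"

definition proj_line :: "('a, 'b) ring_scheme \<Rightarrow> ('a \<times> 'a) set set" where
  "proj_line R = {cyc R (carrier R) a b | a b c d. (a, b, c, d) \<in> GL2 R (carrier R)}"

text \<open>The image of P(K) in P(R) under K(a,b) \<mapsto> R(a,b).\<close>
definition proj_line_sub :: "('a, 'b) ring_scheme \<Rightarrow> 'a set \<Rightarrow> ('a \<times> 'a) set set" where
  "proj_line_sub R K = {cyc R (carrier R) a b | a b c d. (a, b, c, d) \<in> GL2 R K}"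

text \<open>Right action of a 2x2 matrix on row vectors, and on points (submodules).\<close>
definition vec_act :: "('a, 'b) ring_scheme \<Rightarrow> 'a mat2 \<Rightarrow> 'a \<times> 'a \<Rightarrow> 'a \<times> 'a" where
  "vec_act R g v = (case v of (x, y) \<Rightarrow> case g of (a, b, c, d) \<Rightarrow>
     (x \<otimes>\<^bsub>R\<^esub> a \<oplus>\<^bsub>R\<^esub> y \<otimes>\<^bsub>R\<^esub> c, x \<otimes>\<^bsub>R\<^esub> b \<oplus>\<^bsub>R\<^esub> y \<otimes>\<^bsub>R\<^esub> d))"

definition point_act :: "('a, 'b) ring_scheme \<Rightarrow> 'a mat2 \<Rightarrow> ('a \<times> 'a) set \<Rightarrow> ('a \<times> 'a) set" where
  "point_act R g p = vec_act R g ` p"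

definition chains :: "('a, 'b) ring_scheme \<Rightarrow> 'a set \<Rightarrow> ('a \<times> 'a) set set set" where
  "chains R K = {point_act R g ` proj_line_sub R K | g. g \<in> GL2 R (carrier R)}"

definition blocking_set :: "('a, 'b) ring_scheme \<Rightarrow> 'a set \<Rightarrow> ('a \<times> 'a) set set \<Rightarrow> bool" where
  "blocking_set R K B \<longleftrightarrow> B \<subseteq> proj_line R \<and> (\<forall>C \<in> chains R K. C \<inter> B \<noteq> {})"

end

theory Submission
  imports Defs
begin

text \<open>
  Let M be the ideal of nonunits, so that R/M has q^2 elements. The chain P(K)^g contains the
  points spanned by the rows (1, b) g with b in K. If one of these rows has a nonunit first
  entry, its second entry is a unit and the point is R(t, 1) with t in M. Otherwise every row
  spans a point R(1, s_b), and the slopes s_b lie in q distinct cosets of M. These q-sets of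
  cosets depend only on g modulo M, so there are at most q^8 of them, and a greedy hitting set T
  for them among the q^2 cosets has O(q log q) elements. Hence the points R(1, s) with s in a
  coset of T, together with the points R(t, 1) with t in M, form a blocking set with at most
  (|T| + 1) q^delta = O(q^(d-1) log q) elements.
\<close>

lemma exists_element_in_many_members:
  assumes "finite Y" "F \<subseteq> Pow Y" "F \<noteq> {}" "k > 0" "\<forall>C\<in>F. k \<le> card C"
  shows "\<exists>y\<in>Y. k * card F \<le> card Y * card {C\<in>F. y \<in> C}"
proof (rule ccontr)
  assume few: "\<not> ?thesis"
  have "finite F" using assms(1,2) finite_subset by blast
  have "Y \<noteq> {}"
  proof
    assume "Y = {}"
    with assms(2,3) have "{} \<in> F" by auto
    with assms(4,5) show False by fastforce
  qed
  have "(\<Sum>C\<in>F. card C) = (\<Sum>C\<in>F. \<Sum>y\<in>Y. if y \<in> C then 1 else (0::nat))"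
    using assms(1,2) by (intro sum.cong) (auto simp: sum.If_cases Int_absorb1)
  also have "\<dots> = (\<Sum>y\<in>Y. card {C\<in>F. y \<in> C})"
    using \<open>finite F\<close> by (subst sum.swap) (simp add: sum.If_cases Int_def conj_commute)
  finally have incidences: "(\<Sum>C\<in>F. card C) = (\<Sum>y\<in>Y. card {C\<in>F. y \<in> C})" .
  have "card Y * (k * card F) \<le> card Y * (\<Sum>C\<in>F. card C)"
    using assms(5) sum_mono[of F "\<lambda>_. k" card] by (simp add: mult.commute)
  also have "\<dots> = (\<Sum>y\<in>Y. card Y * card {C\<in>F. y \<in> C})"
    by (simp add: incidences sum_distrib_left)
  also have "\<dots> < (\<Sum>y\<in>Y. k * card F)"
    using few assms(1) \<open>Y \<noteq> {}\<close> by (intro sum_strict_mono) (auto simp: not_le)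
  finally show False by simp
qed

lemma ln_greedy_step:
  fixes a b k v :: real
  assumes "0 < b" "b \<le> a" "0 < k" "0 < v" "k * a \<le> v * (a - b)"
  shows "v / k * ln b + 1 \<le> v / k * ln a"
proof -
  have "ln b - ln a = ln (b / a)" using assms(1,2) by (simp add: ln_div)
  also have "\<dots> \<le> b / a - 1" using assms(1,2) by (intro ln_le_minus_one) simp
  also have "\<dots> \<le> - k / v" using assms by (simp add: field_simps)
  finally have "v / k * (ln b - ln a) \<le> v / k * (- k / v)"
    using assms(3,4) by (intro mult_left_mono) auto
  then show ?thesis using assms(3,4) by (simp add: algebra_simps)
qed

lemma one_le_mult_ln:
  fixes x :: real
  assumes "2 \<le> x"
  shows "1 \<le> x * ln x"
proof -
  have "ln (1 / x) \<le> 1 / x - 1" using assms by (intro ln_le_minus_one) simp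
  then have "1 - 1 / x \<le> ln x" using assms by (simp add: ln_div)
  then have "x - 1 \<le> x * ln x" using assms by (simp add: field_simps)
  then show ?thesis using assms by linarith
qed

lemma greedy_hitting_set:
  fixes Y :: "'a set" and F :: "'a set set" and k :: nat
  assumes "finite Y" "F \<subseteq> Pow Y" "k > 0" "\<forall>C\<in>F. k \<le> card C"
  shows "\<exists>T \<subseteq> Y. (\<forall>C\<in>F. C \<inter> T \<noteq> {}) \<and>
           real (card T) \<le> real (card Y) / real k * ln (real (card F)) + 1"
  using assms(2,4)
proof (induction "card F" arbitrary: F rule: less_induct)
  case less
  show ?case
  proof (cases "F = {}")
    case True then show ?thesis by (intro exI[of _ "{}"]) auto
  next
    case False
    have "finite F" using assms(1) less.prems(1) finite_subset by blast
    obtain y where y: "y \<in> Y" "k * card F \<le> card Y * card {C\<in>F. y \<in> C}"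
      using exists_element_in_many_members[OF assms(1) less.prems(1) False assms(3) less.prems(2)]
      by blast
    define F' where "F' = {C\<in>F. y \<notin> C}"
    have split: "card F = card F' + card {C\<in>F. y \<in> C}"
      unfolding F'_def using \<open>finite F\<close>
      by (subst card_Un_disjoint[symmetric]) (auto intro: arg_cong[where f=card])
    have "0 < card F" using False \<open>finite F\<close> by (simp add: card_gt_0_iff)
    then have "0 < card {C\<in>F. y \<in> C}" using y(2) assms(3) by (metis gr0I mult_is_0 not_le)
    show ?thesis
    proof (cases "F' = {}")
      case True
      then have "\<forall>C\<in>F. C \<inter> {y} \<noteq> {}" unfolding F'_def by auto
      then show ?thesis using y(1) \<open>0 < card F\<close> by (intro exI[of _ "{y}"]) auto
    next
      case False
      obtain T' where T': "T' \<subseteq> Y" "\<forall>C\<in>F'. C \<inter> T' \<noteq> {}"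
        "real (card T') \<le> real (card Y) / real k * ln (real (card F')) + 1"
        using less.hyps[of F'] less.prems split \<open>0 < card {C\<in>F. y \<in> C}\<close>
        unfolding F'_def by auto
      have "0 < card F'" using False \<open>finite F\<close> unfolding F'_def by (simp add: card_gt_0_iff)
      have "real (k * card F) \<le> real (card Y * card {C\<in>F. y \<in> C})"
        using y(2) by (simp only: of_nat_le_iff)
      then have "real k * real (card F) \<le> real (card Y) * (real (card F) - real (card F'))"
        using split by simp
      then have "real (card Y) / real k * ln (real (card F')) + 1
                   \<le> real (card Y) / real k * ln (real (card F))"
        using \<open>0 < card F'\<close> y(1) split assms(1,3)
        by (intro ln_greedy_step) (auto simp: card_gt_0_iff)
      moreover have "\<forall>C\<in>F. C \<inter> insert y T' \<noteq> {}" using T'(2) unfolding F'_def by auto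
      ultimately show ?thesis using T' y(1) assms(1)
        by (intro exI[of _ "insert y T'"]) (auto simp: card_insert_if finite_subset)
    qed
  qed
qed

lemma card_image_le_if_factors:
  assumes "finite (f ` A)" "\<And>x y. x \<in> A \<Longrightarrow> y \<in> A \<Longrightarrow> f x = f y \<Longrightarrow> h x = h y"
  shows "card (h ` A) \<le> card (f ` A)"
proof -
  have "h ` A \<subseteq> (h \<circ> inv_into A f) ` f ` A"
  proof
    fix z assume "z \<in> h ` A"
    then obtain x where x: "x \<in> A" "z = h x" by blast
    then have "h (inv_into A f (f x)) = h x"
      using assms(2)[of "inv_into A f (f x)" x] by (simp add: inv_into_into f_inv_into_f)
    then show "z \<in> (h \<circ> inv_into A f) ` f ` A" using x by force
  qed
  then have "card (h ` A) \<le> card ((h \<circ> inv_into A f) ` f ` A)"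
    using assms(1) by (intro card_mono) auto
  also have "\<dots> \<le> card (f ` A)" using assms(1) by (rule card_image_le)
  finally show ?thesis .
qed

lemma (in ring) card_of_dimension:
  assumes "subfield K R" "finite K" "dimension n K E"
  shows "card E = card K ^ n"
proof -
  obtain Vs where Vs: "set Vs \<subseteq> carrier R" "independent K Vs" "length Vs = n" "Span K Vs = E"
    using exists_base[OF assms(1,3)] by blast
  let ?coords = "{Ks. set Ks \<subseteq> K \<and> length Ks = n}"
  have "E = (\<lambda>Ks. combine Ks Vs) ` ?coords"
    using Span_mem_iff_length_version[OF assms(1) Vs(1)] Vs(3,4) by (auto simp: image_def)
  moreover have "inj_on (\<lambda>Ks. combine Ks Vs) ?coords"
  proof (rule inj_onI)
    fix Ks Ks' assume Ks: "Ks \<in> ?coords" "Ks' \<in> ?coords" "combine Ks Vs = combine Ks' Vs"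
    then have "combine Ks Vs \<in> Span K Vs"
      using Span_mem_iff_length_version[OF assms(1) Vs(1)] Vs(3) by auto
    then have "\<exists>!L. set L \<subseteq> K \<and> length L = n \<and> combine Ks Vs = combine L Vs"
      using unique_decomposition[OF assms(1) Vs(2)] Vs(3) by simp
    then show "Ks = Ks'" using Ks by blast
  qed
  ultimately show ?thesis using assms(2) by (simp add: card_image card_lists_length_eq)
qed

context ring
begin

lemma vec_act_closed:
  assumes "g \<in> carrier R \<times> carrier R \<times> carrier R \<times> carrier R" "x \<in> carrier R" "y \<in> carrier R"
  shows "vec_act R g (x, y) \<in> carrier R \<times> carrier R"
  using assms unfolding vec_act_def by (cases g) auto

lemma vec_act_smult:
  assumes "g \<in> carrier R \<times> carrier R \<times> carrier R \<times> carrier R"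
    and "r \<in> carrier R" "x \<in> carrier R" "y \<in> carrier R"
  shows "vec_act R g (r \<otimes> x, r \<otimes> y)
           = (r \<otimes> fst (vec_act R g (x, y)), r \<otimes> snd (vec_act R g (x, y)))"
  using assms unfolding vec_act_def by (cases g) (simp add: m_assoc r_distr)

lemma vec_act_mat2_mult:
  assumes "g \<in> carrier R \<times> carrier R \<times> carrier R \<times> carrier R"
    and "h \<in> carrier R \<times> carrier R \<times> carrier R \<times> carrier R"
    and "x \<in> carrier R" "y \<in> carrier R"
  shows "vec_act R (mat2_mult R g h) (x, y) = vec_act R h (vec_act R g (x, y))"
  using assms unfolding vec_act_def mat2_mult_def
  by (cases g, cases h) (simp add: r_distr l_distr m_assoc a_ac)

lemma vec_act_mat2_one:
  assumes "x \<in> carrier R" "y \<in> carrier R"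
  shows "vec_act R (mat2_one R) (x, y) = (x, y)"
  using assms unfolding vec_act_def mat2_one_def by simp

lemma GL2_carrier: "GL2 R S \<subseteq> S \<times> S \<times> S \<times> S"
  unfolding GL2_def by blast

lemma GL2_right_inverse_action:
  assumes "g \<in> GL2 R (carrier R)"
  obtains h where "h \<in> carrier R \<times> carrier R \<times> carrier R \<times> carrier R"
    and "\<And>x y. x \<in> carrier R \<Longrightarrow> y \<in> carrier R \<Longrightarrow> vec_act R h (vec_act R g (x, y)) = (x, y)"
proof -
  have "\<exists>h \<in> carrier R \<times> carrier R \<times> carrier R \<times> carrier R.
          mat2_mult R g h = mat2_one R \<and> mat2_mult R h g = mat2_one R"
    using assms by (simp only: GL2_def mem_Collect_eq)
  then obtain h where h: "h \<in> carrier R \<times> carrier R \<times> carrier R \<times> carrier R" "mat2_mult R g h = mat2_one R"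
    by (elim bexE conjE)
  have "g \<in> carrier R \<times> carrier R \<times> carrier R \<times> carrier R" using assms GL2_carrier by blast
  then have "vec_act R h (vec_act R g (x, y)) = (x, y)" if "x \<in> carrier R" "y \<in> carrier R" for x y
    using h that by (simp flip: vec_act_mat2_mult add: vec_act_mat2_one)
  with h(1) show thesis by (rule that)
qed

lemma cyc_eq_image: "cyc R S a b = (\<lambda>r. (r \<otimes> a, r \<otimes> b)) ` S"
  unfolding cyc_def by (rule Setcompr_eq_image)

lemma point_act_cyc:
  assumes "g \<in> carrier R \<times> carrier R \<times> carrier R \<times> carrier R" "x \<in> carrier R" "y \<in> carrier R"
  shows "point_act R g (cyc R (carrier R) x y)
           = cyc R (carrier R) (fst (vec_act R g (x, y))) (snd (vec_act R g (x, y)))"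
  unfolding point_act_def cyc_eq_image image_image
  using vec_act_smult[OF assms(1) _ assms(2,3)] by (intro image_cong) simp_all

lemma Units_r_mult_image:
  assumes "u \<in> Units R"
  shows "(\<lambda>r. r \<otimes> u) ` carrier R = carrier R"
proof
  show "(\<lambda>r. r \<otimes> u) ` carrier R \<subseteq> carrier R" using assms by auto
  show "carrier R \<subseteq> (\<lambda>r. r \<otimes> u) ` carrier R"
  proof
    fix r assume "r \<in> carrier R"
    then have "r = (r \<otimes> inv u) \<otimes> u" using assms Units_closed[OF assms] by (simp add: m_assoc)
    then show "r \<in> (\<lambda>r. r \<otimes> u) ` carrier R" using assms \<open>r \<in> carrier R\<close> by blast
  qed
qed

lemma cyc_Units_smult:
  assumes "u \<in> Units R" "x \<in> carrier R" "y \<in> carrier R"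
  shows "cyc R (carrier R) (u \<otimes> x) (u \<otimes> y) = cyc R (carrier R) x y"
proof -
  have "cyc R (carrier R) (u \<otimes> x) (u \<otimes> y) = (\<lambda>r. (r \<otimes> x, r \<otimes> y)) ` ((\<lambda>r. r \<otimes> u) ` carrier R)"
    unfolding cyc_eq_image image_image using assms Units_closed[OF assms(1)]
    by (intro image_cong) (simp_all add: m_assoc)
  then show ?thesis using Units_r_mult_image[OF assms(1)] by (simp add: cyc_eq_image)
qed

lemma upper_unitriangular_in_GL2:
  assumes "subring S R" "s \<in> S"
  shows "(\<one>, s, \<zero>, \<one>) \<in> GL2 R S"
proof -
  note S = subringE[OF assms(1)]
  have "s \<in> carrier R" using S(1) assms(2) by blast
  then show ?thesis
    using S(2,3,5) assms(2) unfolding GL2_def mat2_mult_def mat2_one_def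
    by (intro CollectI conjI bexI[of _ "(\<one>, \<ominus> s, \<zero>, \<one>)"]) (simp_all add: r_neg l_neg)
qed

lemma cyc_one_left_in_proj_line_sub:
  assumes "subring S R" "s \<in> S"
  shows "cyc R (carrier R) \<one> s \<in> proj_line_sub R S"
  unfolding proj_line_sub_def using upper_unitriangular_in_GL2[OF assms] by blast

lemma cyc_one_left_in_proj_line:
  assumes "s \<in> carrier R"
  shows "cyc R (carrier R) \<one> s \<in> proj_line R"
  using cyc_one_left_in_proj_line_sub[OF carrier_is_subring assms]
  unfolding proj_line_def proj_line_sub_def .

lemma cyc_one_right_in_proj_line:
  assumes "t \<in> carrier R"
  shows "cyc R (carrier R) t \<one> \<in> proj_line R"
proof -
  have "(t, \<one>, \<one>, \<zero>) \<in> GL2 R (carrier R)"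
    using assms unfolding GL2_def mat2_mult_def mat2_one_def
    by (intro CollectI conjI bexI[of _ "(\<zero>, \<one>, \<one>, \<ominus> t)"]) (simp_all add: r_neg l_neg)
  then show ?thesis unfolding proj_line_def by blast
qed

end

locale finite_local_algebra = ring R for R (structure) +
  fixes K :: "'a set"
  assumes nonunits_ideal: "ideal (carrier R - Units R) R"
    and subfield: "subfield K R"
    and finite_carrier: "finite (carrier R)"
begin

definition nonunits :: "'a set" where "nonunits = carrier R - Units R"

sublocale nonunits: ideal nonunits R
  unfolding nonunits_def by (rule nonunits_ideal)

lemma K_carrier: "K \<subseteq> carrier R"
  using subfieldE(3)[OF subfield] .

lemma subfield_inter_nonunits: "K \<inter> nonunits = {\<zero>}"
proof -
  have "k \<in> Units R" if "k \<in> K" "k \<noteq> \<zero>" for k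
    using subfield_m_inv[OF subfield, of k] subfieldE(3)[OF subfield] that
    unfolding Units_def by auto
  then have "K \<inter> nonunits \<subseteq> {\<zero>}" unfolding nonunits_def by blast
  moreover have "\<zero> \<in> K" using subringE(2)[OF subfieldE(1)[OF subfield]] .
  ultimately show ?thesis using nonunits.zero_closed by blast
qed

lemma coset_eq_iff:
  assumes "x \<in> carrier R" "y \<in> carrier R"
  shows "nonunits +> x = nonunits +> y \<longleftrightarrow> x \<ominus> y \<in> nonunits"
proof
  assume "nonunits +> x = nonunits +> y"
  then have "x \<in> nonunits +> y" using nonunits.a_repr_independenceD[OF assms(1)] by simp
  then show "x \<ominus> y \<in> nonunits" using nonunits.a_rcos_module_minus[OF ring_axioms assms(2,1)] by simp
next
  assume "x \<ominus> y \<in> nonunits"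
  then have "x \<in> nonunits +> y" using nonunits.a_rcos_module_minus[OF ring_axioms assms(2,1)] by simp
  then show "nonunits +> x = nonunits +> y" using nonunits.a_repr_independence'[OF _ assms(2)] by simp
qed

definition cong_mod_multiple :: "'a \<Rightarrow> 'a \<times> 'a \<Rightarrow> 'a \<times> 'a \<Rightarrow> bool" where
  "cong_mod_multiple l v w \<longleftrightarrow> fst v \<ominus> l \<otimes> fst w \<in> nonunits \<and> snd v \<ominus> l \<otimes> snd w \<in> nonunits"

lemma cong_mod_multiple_vec_act:
  assumes g: "g \<in> carrier R \<times> carrier R \<times> carrier R \<times> carrier R"
    and carr: "x \<in> carrier R" "y \<in> carrier R" "x' \<in> carrier R" "y' \<in> carrier R" "l \<in> carrier R"
    and "cong_mod_multiple l (x, y) (x', y')"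
  shows "cong_mod_multiple l (vec_act R g (x, y)) (vec_act R g (x', y'))"
proof -
  obtain a b c d where abcd: "g = (a, b, c, d)" by (cases g)
  have "a \<in> carrier R" "b \<in> carrier R" "c \<in> carrier R" "d \<in> carrier R" using g abcd by auto
  then have "(x \<otimes> a \<oplus> y \<otimes> c) \<ominus> l \<otimes> (x' \<otimes> a \<oplus> y' \<otimes> c) = (x \<ominus> l \<otimes> x') \<otimes> a \<oplus> (y \<ominus> l \<otimes> y') \<otimes> c"
    and "(x \<otimes> b \<oplus> y \<otimes> d) \<ominus> l \<otimes> (x' \<otimes> b \<oplus> y' \<otimes> d) = (x \<ominus> l \<otimes> x') \<otimes> b \<oplus> (y \<ominus> l \<otimes> y') \<otimes> d"
    using carr by algebra+
  with assms(7) show ?thesis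
    using \<open>a \<in> carrier R\<close> \<open>b \<in> carrier R\<close> \<open>c \<in> carrier R\<close> \<open>d \<in> carrier R\<close>
    unfolding cong_mod_multiple_def vec_act_def abcd
    by (simp add: nonunits.a_closed nonunits.I_r_closed)
qed

lemma cong_mod_multiple_GL2_cancel:
  assumes g: "g \<in> GL2 R (carrier R)"
    and carr: "x \<in> carrier R" "y \<in> carrier R" "x' \<in> carrier R" "y' \<in> carrier R" "l \<in> carrier R"
    and cong: "cong_mod_multiple l (vec_act R g (x, y)) (vec_act R g (x', y'))"
  shows "cong_mod_multiple l (x, y) (x', y')"
proof -
  obtain h where h: "h \<in> carrier R \<times> carrier R \<times> carrier R \<times> carrier R"
    and inv: "\<And>x y. x \<in> carrier R \<Longrightarrow> y \<in> carrier R \<Longrightarrow> vec_act R h (vec_act R g (x, y)) = (x, y)"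
    using GL2_right_inverse_action[OF g] by blast
  have gc: "g \<in> carrier R \<times> carrier R \<times> carrier R \<times> carrier R" using g GL2_carrier by blast
  obtain u v where uv: "vec_act R g (x, y) = (u, v)" by fastforce
  obtain u' v' where uv': "vec_act R g (x', y') = (u', v')" by fastforce
  have "u \<in> carrier R" "v \<in> carrier R" "u' \<in> carrier R" "v' \<in> carrier R"
    using vec_act_closed[OF gc carr(1,2)] vec_act_closed[OF gc carr(3,4)] uv uv' by auto
  from cong_mod_multiple_vec_act[OF h this carr(5)] cong
  have "cong_mod_multiple l (vec_act R h (u, v)) (vec_act R h (u', v'))" unfolding uv uv' .
  then show ?thesis using inv[OF carr(1,2)] inv[OF carr(3,4)] uv uv' by simp
qed

lemma GL2_row_has_unit:
  assumes g: "g \<in> GL2 R (carrier R)" and "b \<in> carrier R"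
  shows "fst (vec_act R g (\<one>, b)) \<in> Units R \<or> snd (vec_act R g (\<one>, b)) \<in> Units R"
proof (rule ccontr)
  have gc: "g \<in> carrier R \<times> carrier R \<times> carrier R \<times> carrier R" using g GL2_carrier by blast
  assume "\<not> ?thesis"
  \<comment> \<open>\<open>cong_mod_multiple \<zero> v v\<close> says that both entries of \<open>v\<close> are nonunits.\<close>
  then have "cong_mod_multiple \<zero> (vec_act R g (\<one>, b)) (vec_act R g (\<one>, b))"
    using vec_act_closed[OF gc one_closed assms(2)]
    unfolding cong_mod_multiple_def nonunits_def by (auto simp: mem_Times_iff minus_eq)
  then have "cong_mod_multiple \<zero> (\<one>, b) (\<one>, b)"
    using cong_mod_multiple_GL2_cancel[OF g] assms(2) by simp
  then show False unfolding cong_mod_multiple_def nonunits_def by (simp add: minus_eq)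
qed

definition slope :: "'a mat2 \<Rightarrow> 'a \<Rightarrow> 'a" where
  "slope g b = inv (fst (vec_act R g (\<one>, b))) \<otimes> snd (vec_act R g (\<one>, b))"

definition affine_chain :: "'a mat2 \<Rightarrow> bool" where
  "affine_chain g \<longleftrightarrow> g \<in> GL2 R (carrier R) \<and> (\<forall>b\<in>K. fst (vec_act R g (\<one>, b)) \<in> Units R)"

definition slope_classes :: "'a mat2 \<Rightarrow> 'a set set" where
  "slope_classes g = (\<lambda>b. nonunits +> slope g b) ` K"

lemma affine_chain_row_closed:
  assumes "affine_chain g" "b \<in> K"
  shows "fst (vec_act R g (\<one>, b)) \<in> Units R" "snd (vec_act R g (\<one>, b)) \<in> carrier R"
proof -
  have "g \<in> carrier R \<times> carrier R \<times> carrier R \<times> carrier R"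
    using assms(1) GL2_carrier unfolding affine_chain_def by blast
  then show "snd (vec_act R g (\<one>, b)) \<in> carrier R"
    using vec_act_closed[OF _ one_closed, of g b] assms(2) K_carrier by (auto simp: mem_Times_iff)
  show "fst (vec_act R g (\<one>, b)) \<in> Units R" using assms unfolding affine_chain_def by blast
qed

lemma slope_closed: "affine_chain g \<Longrightarrow> b \<in> K \<Longrightarrow> slope g b \<in> carrier R"
  unfolding slope_def using affine_chain_row_closed by blast

lemma rows_cong_mod_multiple_if_slope_cosets_eq:
  assumes g: "affine_chain g" and b: "b \<in> K" "b' \<in> K"
    and eq: "nonunits +> slope g b = nonunits +> slope g b'"
  shows "\<exists>l\<in>carrier R. cong_mod_multiple l (vec_act R g (\<one>, b)) (vec_act R g (\<one>, b'))"
proof -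
  obtain a c where ac: "vec_act R g (\<one>, b) = (a, c)" by fastforce
  obtain a' c' where ac': "vec_act R g (\<one>, b') = (a', c')" by fastforce
  have u: "a \<in> Units R" "a' \<in> Units R" and cc: "c \<in> carrier R" "c' \<in> carrier R"
    using affine_chain_row_closed[OF g b(1)] affine_chain_row_closed[OF g b(2)] ac ac' by auto
  note uc = Units_closed[OF u(1)] Units_closed[OF u(2)] Units_inv_closed[OF u(1)] Units_inv_closed[OF u(2)]
  define l where "l = a \<otimes> inv a'"
  have "inv a \<otimes> c \<ominus> inv a' \<otimes> c' \<in> nonunits"
    using coset_eq_iff slope_closed[OF g b(1)] slope_closed[OF g b(2)] eq ac ac'
    unfolding slope_def by simp
  then have "a \<otimes> (inv a \<otimes> c \<ominus> inv a' \<otimes> c') \<in> nonunits"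
    using uc by (simp add: nonunits.I_l_closed)
  moreover have "a \<otimes> (inv a \<otimes> c \<ominus> inv a' \<otimes> c') = (a \<otimes> inv a) \<otimes> c \<ominus> (a \<otimes> inv a') \<otimes> c'"
    using uc cc by algebra
  moreover have "(a \<otimes> inv a) \<otimes> c \<ominus> (a \<otimes> inv a') \<otimes> c' = c \<ominus> l \<otimes> c'"
    unfolding l_def using u cc by simp
  moreover have "a \<ominus> l \<otimes> a' = \<zero>"
    unfolding l_def using uc u by (simp add: m_assoc)
  ultimately have "cong_mod_multiple l (vec_act R g (\<one>, b)) (vec_act R g (\<one>, b'))"
    unfolding cong_mod_multiple_def ac ac' by (simp add: nonunits.zero_closed)
  moreover have "l \<in> carrier R" unfolding l_def using uc by simp
  ultimately show ?thesis by blast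
qed

lemma slope_class_inj:
  assumes g: "affine_chain g" and b: "b \<in> K" "b' \<in> K"
    and eq: "nonunits +> slope g b = nonunits +> slope g b'"
  shows "b = b'"
proof -
  have bc: "b \<in> carrier R" "b' \<in> carrier R" using b K_carrier by auto
  obtain l where l: "l \<in> carrier R"
    and "cong_mod_multiple l (vec_act R g (\<one>, b)) (vec_act R g (\<one>, b'))"
    using rows_cong_mod_multiple_if_slope_cosets_eq[OF assms] by blast
  with g have "cong_mod_multiple l (\<one>, b) (\<one>, b')"
    unfolding affine_chain_def using cong_mod_multiple_GL2_cancel one_closed bc by blast
  then have "\<one> \<ominus> l \<otimes> \<one> \<in> nonunits" "b \<ominus> l \<otimes> b' \<in> nonunits"
    unfolding cong_mod_multiple_def by simp_all
  moreover have "b \<ominus> b' = (b \<ominus> l \<otimes> b') \<ominus> (\<one> \<ominus> l \<otimes> \<one>) \<otimes> b'"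
    using bc l by algebra
  ultimately have "b \<ominus> b' \<in> nonunits"
    using bc by (simp add: minus_eq nonunits.a_closed nonunits.a_inv_closed nonunits.I_r_closed)
  moreover have "b \<ominus> b' \<in> K"
    using b subringE(5,7)[OF subfieldE(1)[OF subfield]] by (simp add: minus_eq)
  ultimately have "b \<ominus> b' = \<zero>" using subfield_inter_nonunits by blast
  then show "b = b'" using bc by (simp add: r_right_minus_eq)
qed

lemma card_slope_classes: "affine_chain g \<Longrightarrow> card (slope_classes g) = card K"
  unfolding slope_classes_def by (intro card_image inj_onI) (rule slope_class_inj)

lemma slope_classes_subset: "affine_chain g \<Longrightarrow> slope_classes g \<subseteq> a_rcosets nonunits"
  unfolding slope_classes_def using slope_closed a_rcosetsI[OF nonunits.a_subset] by blast

definition entry_cosets :: "'a mat2 \<Rightarrow> 'a set \<times> 'a set \<times> 'a set \<times> 'a set" where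
  "entry_cosets g = (case g of (a, b, c, d) \<Rightarrow>
     (nonunits +> a, nonunits +> b, nonunits +> c, nonunits +> d))"

lemma coset_mult_eq:
  assumes "x \<in> carrier R" "y \<in> carrier R" "x' \<in> carrier R" "y' \<in> carrier R"
    and "nonunits +> x = nonunits +> x'" "nonunits +> y = nonunits +> y'"
  shows "nonunits +> (x \<otimes> y) = nonunits +> (x' \<otimes> y')"
  using nonunits.rcoset_mult_add[OF assms(1,2)] nonunits.rcoset_mult_add[OF assms(3,4)] assms(5,6)
  by simp

lemma coset_add_eq:
  assumes "x \<in> carrier R" "y \<in> carrier R" "x' \<in> carrier R" "y' \<in> carrier R"
    and "nonunits +> x = nonunits +> x'" "nonunits +> y = nonunits +> y'"
  shows "nonunits +> (x \<oplus> y) = nonunits +> (x' \<oplus> y')"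
  using nonunits.a_rcos_sum[OF assms(1,2)] nonunits.a_rcos_sum[OF assms(3,4)] assms(5,6)
  by simp

lemma coset_inv_eq:
  assumes u: "u \<in> Units R" "u' \<in> Units R" and eq: "nonunits +> u = nonunits +> u'"
  shows "nonunits +> inv u = nonunits +> inv u'"
proof -
  note uc = Units_closed[OF u(1)] Units_closed[OF u(2)] Units_inv_closed[OF u(1)] Units_inv_closed[OF u(2)]
  have "u' \<ominus> u \<in> nonunits" using eq[symmetric] coset_eq_iff uc by simp
  then have "inv u \<otimes> (u' \<ominus> u) \<otimes> inv u' \<in> nonunits"
    using uc by (simp add: nonunits.I_l_closed nonunits.I_r_closed)
  moreover have "inv u \<otimes> (u' \<ominus> u) \<otimes> inv u' = (inv u \<otimes> u') \<otimes> inv u' \<ominus> (inv u \<otimes> u) \<otimes> inv u'"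
    using uc by algebra
  ultimately have "inv u \<ominus> inv u' \<in> nonunits" using u uc by (simp add: m_assoc)
  then show ?thesis using coset_eq_iff uc by simp
qed

lemma coset_vec_act_eq:
  assumes g: "g \<in> carrier R \<times> carrier R \<times> carrier R \<times> carrier R"
    and g': "g' \<in> carrier R \<times> carrier R \<times> carrier R \<times> carrier R"
    and eq: "entry_cosets g = entry_cosets g'" and xy: "x \<in> carrier R" "y \<in> carrier R"
  shows "nonunits +> fst (vec_act R g (x, y)) = nonunits +> fst (vec_act R g' (x, y))"
    and "nonunits +> snd (vec_act R g (x, y)) = nonunits +> snd (vec_act R g' (x, y))"
proof -
  obtain a b c d where abcd: "g = (a, b, c, d)" by (cases g)
  obtain a' b' c' d' where abcd': "g' = (a', b', c', d')" by (cases g')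
  have carr: "a \<in> carrier R" "b \<in> carrier R" "c \<in> carrier R" "d \<in> carrier R"
    "a' \<in> carrier R" "b' \<in> carrier R" "c' \<in> carrier R" "d' \<in> carrier R"
    using g g' unfolding abcd abcd' by auto
  have cosets: "nonunits +> a = nonunits +> a'" "nonunits +> b = nonunits +> b'"
    "nonunits +> c = nonunits +> c'" "nonunits +> d = nonunits +> d'"
    using eq unfolding entry_cosets_def abcd abcd' by simp_all
  have "nonunits +> (z \<otimes> e) = nonunits +> (z \<otimes> e')"
    if "z \<in> carrier R" "e \<in> carrier R" "e' \<in> carrier R" "nonunits +> e = nonunits +> e'" for z e e'
    using coset_mult_eq[OF that(1,2,1,3) refl that(4)] .
  note terms = this[OF xy(1) carr(1,5) cosets(1)] this[OF xy(2) carr(3,7) cosets(3)]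
    this[OF xy(1) carr(2,6) cosets(2)] this[OF xy(2) carr(4,8) cosets(4)]
  have "nonunits +> (x \<otimes> a \<oplus> y \<otimes> c) = nonunits +> (x \<otimes> a' \<oplus> y \<otimes> c')"
   and "nonunits +> (x \<otimes> b \<oplus> y \<otimes> d) = nonunits +> (x \<otimes> b' \<oplus> y \<otimes> d')"
    using xy carr by (intro coset_add_eq terms; simp)+
  then show "nonunits +> fst (vec_act R g (x, y)) = nonunits +> fst (vec_act R g' (x, y))"
    and "nonunits +> snd (vec_act R g (x, y)) = nonunits +> snd (vec_act R g' (x, y))"
    unfolding vec_act_def abcd abcd' by simp_all
qed

lemma slope_classes_eq:
  assumes g: "affine_chain g" and g': "affine_chain g'" and eq: "entry_cosets g = entry_cosets g'"
  shows "slope_classes g = slope_classes g'"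
proof -
  have gc: "g \<in> carrier R \<times> carrier R \<times> carrier R \<times> carrier R"
    and gc': "g' \<in> carrier R \<times> carrier R \<times> carrier R \<times> carrier R"
    using g g' GL2_carrier unfolding affine_chain_def by blast+
  have "nonunits +> slope g b = nonunits +> slope g' b" if b: "b \<in> K" for b
  proof -
    have bc: "b \<in> carrier R" using b K_carrier by blast
    note row = affine_chain_row_closed[OF g b] affine_chain_row_closed[OF g' b]
    note same = coset_vec_act_eq[OF gc gc' eq one_closed bc]
    show ?thesis
      unfolding slope_def
      using coset_mult_eq[OF _ row(2) _ row(4) coset_inv_eq[OF row(1) row(3) same(1)] same(2)] row
      by simp
  qed
  then show ?thesis unfolding slope_classes_def by (auto intro: image_cong)
qed

lemma card_slope_classes_family:
  "card (slope_classes ` {g. affine_chain g}) \<le> card (a_rcosets nonunits) ^ 4"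
proof -
  let ?Y = "a_rcosets nonunits"
  have "entry_cosets ` {g. affine_chain g} \<subseteq> ?Y \<times> ?Y \<times> ?Y \<times> ?Y"
  proof
    fix X assume "X \<in> entry_cosets ` {g. affine_chain g}"
    then obtain g where g: "affine_chain g" "X = entry_cosets g" by blast
    then have "g \<in> carrier R \<times> carrier R \<times> carrier R \<times> carrier R"
      using GL2_carrier unfolding affine_chain_def by blast
    then show "X \<in> ?Y \<times> ?Y \<times> ?Y \<times> ?Y"
      using g(2) a_rcosetsI[OF nonunits.a_subset] unfolding entry_cosets_def by (cases g) auto
  qed
  note sub = this
  have "finite ?Y" using finite_carrier by (simp add: A_RCOSETS_def RCOSETS_def)
  then have fin: "finite (?Y \<times> ?Y \<times> ?Y \<times> ?Y)" by simp
  have "card (slope_classes ` {g. affine_chain g}) \<le> card (entry_cosets ` {g. affine_chain g})"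
    using card_image_le_if_factors[OF finite_subset[OF sub fin], of slope_classes] slope_classes_eq
    by blast
  also have "\<dots> \<le> card (?Y \<times> ?Y \<times> ?Y \<times> ?Y)" using card_mono[OF fin sub] .
  also have "\<dots> = card ?Y ^ 4" by (simp add: card_cartesian_product power4_eq_xxxx)
  finally show ?thesis .
qed

definition blocking_points :: "'a set set \<Rightarrow> ('a \<times> 'a) set set" where
  "blocking_points T =
     (\<lambda>s. cyc R (carrier R) \<one> s) ` \<Union>T \<union> (\<lambda>t. cyc R (carrier R) t \<one>) ` nonunits"

lemma chain_contains_row:
  assumes "g \<in> GL2 R (carrier R)" "b \<in> K"
  shows "cyc R (carrier R) (fst (vec_act R g (\<one>, b))) (snd (vec_act R g (\<one>, b)))
           \<in> point_act R g ` proj_line_sub R K"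
proof -
  have "g \<in> carrier R \<times> carrier R \<times> carrier R \<times> carrier R" using assms(1) GL2_carrier by blast
  moreover have "b \<in> carrier R" using assms(2) K_carrier by blast
  ultimately have "cyc R (carrier R) (fst (vec_act R g (\<one>, b))) (snd (vec_act R g (\<one>, b)))
                     = point_act R g (cyc R (carrier R) \<one> b)"
    using point_act_cyc one_closed by simp
  moreover have "cyc R (carrier R) \<one> b \<in> proj_line_sub R K"
    using cyc_one_left_in_proj_line_sub[OF subfieldE(1)[OF subfield] assms(2)] .
  ultimately show ?thesis by (rule image_eqI)
qed

lemma affine_chain_contains_slope_point:
  assumes "affine_chain g" "b \<in> K"
  shows "cyc R (carrier R) \<one> (slope g b) \<in> point_act R g ` proj_line_sub R K"
proof -
  note row = affine_chain_row_closed[OF assms]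
  have "cyc R (carrier R) (fst (vec_act R g (\<one>, b))) (snd (vec_act R g (\<one>, b)))
          = cyc R (carrier R) \<one> (slope g b)"
    using cyc_Units_smult[OF row(1) one_closed slope_closed[OF assms]] row Units_closed[OF row(1)]
    unfolding slope_def by (simp add: m_assoc[symmetric])
  then show ?thesis
    using chain_contains_row assms unfolding affine_chain_def by metis
qed

lemma chain_contains_nonunit_point:
  assumes g: "g \<in> GL2 R (carrier R)" and b: "b \<in> K" "fst (vec_act R g (\<one>, b)) \<notin> Units R"
  shows "\<exists>t\<in>nonunits. cyc R (carrier R) t \<one> \<in> point_act R g ` proj_line_sub R K"
proof -
  let ?a = "fst (vec_act R g (\<one>, b))" and ?c = "snd (vec_act R g (\<one>, b))"
  have "g \<in> carrier R \<times> carrier R \<times> carrier R \<times> carrier R" using g GL2_carrier by blast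
  then have carr: "?a \<in> carrier R" "?c \<in> carrier R"
    using vec_act_closed[OF _ one_closed, of g b] b(1) K_carrier by (auto simp: mem_Times_iff)
  have "?c \<in> Units R" using GL2_row_has_unit[OF g, of b] b K_carrier by blast
  have "inv ?c \<otimes> ?a \<in> nonunits"
    using b(2) carr \<open>?c \<in> Units R\<close> nonunits.I_l_closed[of ?a "inv ?c"]
    unfolding nonunits_def by simp
  moreover have "cyc R (carrier R) ?a ?c = cyc R (carrier R) (inv ?c \<otimes> ?a) \<one>"
    using cyc_Units_smult[OF \<open>?c \<in> Units R\<close> _ one_closed, of "inv ?c \<otimes> ?a"] carr \<open>?c \<in> Units R\<close>
    by (simp add: m_assoc[symmetric])
  ultimately show ?thesis using chain_contains_row[OF g b(1)] by metis
qed

lemma blocking_points_subset_proj_line: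
  assumes "T \<subseteq> a_rcosets nonunits"
  shows "blocking_points T \<subseteq> proj_line R"
proof -
  have "\<Union>T \<subseteq> carrier R" using assms nonunits.a_rcosets_carrier by blast
  then show ?thesis
    unfolding blocking_points_def
    using nonunits.a_subset cyc_one_left_in_proj_line cyc_one_right_in_proj_line
    by (intro Un_least image_subsetI) auto
qed

lemma blocking_set_blocking_points:
  assumes T: "T \<subseteq> a_rcosets nonunits"
    and hits: "\<And>g. affine_chain g \<Longrightarrow> slope_classes g \<inter> T \<noteq> {}"
  shows "blocking_set R K (blocking_points T)"
  unfolding blocking_set_def
proof (intro conjI ballI)
  show "blocking_points T \<subseteq> proj_line R" using blocking_points_subset_proj_line[OF T] .
  fix C assume "C \<in> chains R K"
  then obtain g where g: "g \<in> GL2 R (carrier R)" and C: "C = point_act R g ` proj_line_sub R K"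
    unfolding chains_def by blast
  show "C \<inter> blocking_points T \<noteq> {}"
  proof (cases "affine_chain g")
    case True
    then obtain b where b: "b \<in> K" "nonunits +> slope g b \<in> T"
      using hits unfolding slope_classes_def by blast
    then have "slope g b \<in> \<Union>T"
      using nonunits.a_rcos_self[OF slope_closed[OF True b(1)]] by blast
    then have "cyc R (carrier R) \<one> (slope g b) \<in> blocking_points T"
      unfolding blocking_points_def by (intro UnI1 imageI)
    then show ?thesis using affine_chain_contains_slope_point[OF True b(1)] unfolding C by blast
  next
    case False
    then obtain b where "b \<in> K" "fst (vec_act R g (\<one>, b)) \<notin> Units R"
      using g unfolding affine_chain_def by blast
    then obtain t where "t \<in> nonunits" "cyc R (carrier R) t \<one> \<in> C"
      using chain_contains_nonunit_point[OF g] unfolding C by blast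
    moreover have "cyc R (carrier R) t \<one> \<in> blocking_points T" if "t \<in> nonunits" for t
      using that unfolding blocking_points_def by (intro UnI2 imageI)
    ultimately show ?thesis by blast
  qed
qed

lemma card_blocking_points:
  assumes "T \<subseteq> a_rcosets nonunits"
  shows "card (blocking_points T) \<le> (card T + 1) * card nonunits"
proof -
  have "\<Union>T \<subseteq> carrier R" using assms nonunits.a_rcosets_carrier by blast
  then have fin: "finite (\<Union>T)" "finite nonunits"
    using finite_carrier nonunits.a_subset by (auto intro: finite_subset)
  have "card (\<Union>T) \<le> (\<Sum>X\<in>T. card X)" by (rule card_Union_le_sum_card)
  also have "\<dots> = card T * card nonunits"
    using assms a_card_cosets_equal[OF _ nonunits.a_subset finite_carrier] by (simp add: subset_iff)
  finally have "card (\<Union>T) \<le> card T * card nonunits" .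
  moreover have "card (blocking_points T) \<le> card (\<Union>T) + card nonunits"
    unfolding blocking_points_def
    by (rule order_trans[OF card_Un_le add_mono[OF card_image_le card_image_le]]) (use fin in auto)
  ultimately show ?thesis by simp
qed

lemma finite_subfield: "finite K"
  using K_carrier finite_carrier by (rule finite_subset)

lemma card_subfield_pos: "0 < card K"
  using finite_subfield subringE(3)[OF subfieldE(1)[OF subfield]] by (auto simp: card_gt_0_iff)

lemma finite_a_rcosets: "finite (a_rcosets nonunits)"
  using finite_carrier by (simp add: A_RCOSETS_def RCOSETS_def)

lemma card_a_rcosets_pos: "0 < card (a_rcosets nonunits)"
  using finite_a_rcosets a_rcosetsI[OF nonunits.a_subset one_closed] card_gt_0_iff by blast

lemma ln_card_slope_classes_family:
  "ln (real (card (slope_classes ` {g. affine_chain g}))) \<le> 4 * ln (real (card (a_rcosets nonunits)))"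
  (is "ln (real ?n) \<le> 4 * ln ?v")
proof (cases "?n = 0")
  case True then show ?thesis using card_a_rcosets_pos by simp
next
  case False
  have "real ?n \<le> ?v ^ 4" using card_slope_classes_family by (metis of_nat_le_iff of_nat_power)
  then have "ln (real ?n) \<le> ln (?v ^ 4)"
    using False card_a_rcosets_pos by (subst ln_le_cancel_iff) auto
  then show ?thesis using card_a_rcosets_pos by (simp add: ln_realpow)
qed

lemma exists_blocking_set:
  defines "v \<equiv> real (card (a_rcosets nonunits))"
  shows "\<exists>B. blocking_set R K B \<and>
    real (card B) \<le> (v / real (card K) * (4 * ln v) + 2) * real (card nonunits)"
proof -
  let ?Y = "a_rcosets nonunits" and ?F = "slope_classes ` {g. affine_chain g}"
  have "?F \<subseteq> Pow ?Y" using slope_classes_subset by blast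
  moreover have "\<forall>C\<in>?F. card K \<le> card C" using card_slope_classes by auto
  ultimately have "\<exists>T \<subseteq> ?Y. (\<forall>C\<in>?F. C \<inter> T \<noteq> {}) \<and>
                     real (card T) \<le> v / real (card K) * ln (real (card ?F)) + 1"
    unfolding v_def by (rule greedy_hitting_set[OF finite_a_rcosets _ card_subfield_pos])
  then obtain T where T: "T \<subseteq> ?Y" "\<forall>C\<in>?F. C \<inter> T \<noteq> {}"
    and card_T: "real (card T) \<le> v / real (card K) * ln (real (card ?F)) + 1"
    by (elim exE conjE)
  have "v / real (card K) * ln (real (card ?F)) \<le> v / real (card K) * (4 * ln v)"
    using ln_card_slope_classes_family unfolding v_def by (intro mult_left_mono) simp_all
  with card_T have T_bound: "real (card T) + 1 \<le> v / real (card K) * (4 * ln v) + 2"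
    by linarith
  have "real (card (blocking_points T)) \<le> real ((card T + 1) * card nonunits)"
    using card_blocking_points[OF T(1)] by (rule of_nat_mono)
  also have "\<dots> = (real (card T) + 1) * real (card nonunits)" by (simp add: distrib_right)
  also have "\<dots> \<le> (v / real (card K) * (4 * ln v) + 2) * real (card nonunits)"
    using T_bound by (rule mult_right_mono) simp
  finally show ?thesis
    using blocking_set_blocking_points[OF T(1)] T(2) by blast
qed

lemma exists_small_blocking_set:
  assumes q: "card K = q" "2 \<le> q" and d: "dimension d K (carrier R)" "d = 2 + \<delta>"
    and \<delta>: "dimension \<delta> K nonunits"
  shows "\<exists>B. blocking_set R K B \<and> real (card B) \<le> 10 * real q ^ (d - 1) * ln (real q)"
proof -
  have "card (carrier R) = q ^ 2 * q ^ \<delta>" "card nonunits = q ^ \<delta>"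
    using card_of_dimension[OF subfield finite_subfield] d \<delta> q(1)
    by (simp_all add: power_add power2_eq_square)
  moreover have "card (a_rcosets nonunits) * card nonunits = card (carrier R)"
    using a_lagrange[OF finite_carrier nonunits.additive_subgroup_axioms] by (simp add: order_def)
  ultimately have Y: "card (a_rcosets nonunits) = q ^ 2" using q(2) by simp
  obtain B where B: "blocking_set R K B"
    and bound: "real (card B) \<le> (real (q ^ 2) / real q * (4 * ln (real (q ^ 2))) + 2) * real q ^ \<delta>"
    using exists_blocking_set \<open>card nonunits = q ^ \<delta>\<close> q(1) Y by auto
  note bound
  also have "\<dots> = (8 * (real q * ln (real q)) + 2) * real q ^ \<delta>"
    using q(2) by (simp add: power2_eq_square ln_mult)
  also have "\<dots> \<le> 10 * (real q * ln (real q)) * real q ^ \<delta>"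
    using one_le_mult_ln[of "real q"] q(2) by (intro mult_right_mono) auto
  also have "\<dots> = 10 * real q ^ (d - 1) * ln (real q)"
    using d(2) by (simp add: algebra_simps)
  finally show ?thesis using B by blast
qed

end

theorem mainTheorem6:
  shows "\<exists>c::real. c > 0 \<and>
    (\<forall>(R :: nat ring) (K :: nat set) (q :: nat) (d :: nat) (\<delta> :: nat).
       (\<exists>p n. prime p \<and> n > 0 \<and> q = p ^ n) \<and> q \<ge> 2 \<and>
       local_ring R \<and> finite (carrier R) \<and>
       subfield K R \<and> card K = q \<and>
       ring.dimension R d K (carrier R) \<and>
       ring.dimension R \<delta> K (carrier R - Units R) \<and>
       d = 2 + \<delta>
       \<longrightarrow> (\<exists>B. blocking_set R K B \<and>
              real (card B) \<le> c * real q ^ (d - 1) * ln (real q)))"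
proof (intro exI[of _ 10] conjI allI impI)
  fix R :: "nat ring" and K :: "nat set" and q d \<delta> :: nat
  assume H: "(\<exists>p n. prime p \<and> n > 0 \<and> q = p ^ n) \<and> q \<ge> 2 \<and>
       local_ring R \<and> finite (carrier R) \<and> subfield K R \<and> card K = q \<and>
       ring.dimension R d K (carrier R) \<and> ring.dimension R \<delta> K (carrier R - Units R) \<and>
       d = 2 + \<delta>"
  then have "finite_local_algebra R K"
    unfolding finite_local_algebra_def finite_local_algebra_axioms_def local_ring_def by blast
  then interpret finite_local_algebra R K .
  show "\<exists>B. blocking_set R K B \<and> real (card B) \<le> 10 * real q ^ (d - 1) * ln (real q)"
    using exists_small_blocking_set H unfolding nonunits_def by blast
qed simp

end
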